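(* Let $\mathcal{P}$ be a finite nonempty set of stochastic trees and $L$ an LPTS with $k$ states such that $P \preceq L$ for every $P\in\mathcal{P}$. Then there is a partition $\Pi$ of $S_\mathcal{P}$, in which the start states of all trees in $\mathcal{P}$ lie in the same class, having at most $2^k$ classes, such that $\mathcal{P}/\Pi \preceq L$.
   Context: An LPTS is a tuple $\langle S,s^0,\alpha,\tau\rangle$ with finite state set $S$, start state $s^0$, finite action set $\alpha$, finite $\tau\subseteq S\times\alpha\times\mathrm{Dist}(S)$, where $\mathrm{Dist}(S)$ is the set of discrete probability distributions over $S$ (rational probabilities); write $s\xrightarrow{a}\mu$. A stochastic tree is an LPTS whose start state is in the support of no transition's distribution and every other state is in the support of exactly one transition's distribution. Strong simulation: for $\mu_1\in\mathrm{Dist}(S_1)$, $\mu_2\in\mathrm{Dist}(S_2)$, $R\subseteq S_1\times S_2$, $\mu_1\sqsubseteq_R\mu_2$ iff there is $w:S_1\times S_2\to\mathbb{Q}\cap[0,1]$ with $\sum_{s_2}w(s_1,s_2)=\mu_1(s_1)$, $\sum_{s_1}w(s_1,s_2)=\mu_2(s_2)$ and $w(s_1,s_2)>0\Rightarrow s_1Rs_2$; $R$ is a strong simulation iff $s_1Rs_2$ and $s_1\xrightarrow{a}\mu_1$ imply some $s_2\xrightarrow{a}\mu_2$ with $\mu_1\sqsubseteq_R\mu_2$; $L_1\preceq L_2$ iff a strong simulation relates the start states. $S_\mathcal{P}$ is the (disjoint) union of the state sets of the trees in $\mathcal{P}$. For a partition $\Pi$ of $S_\mathcal{P}$ with classes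 $E_\Pi$ and class $[s]$ of $s$ (start states all in one class), the quotient $\mathcal{P}/\Pi$ is the LPTS with states $E_\Pi$, start state the common class of the start states, actions $\bigcup_{P\in\mathcal{P}}\alpha_P$, and a transition $e\xrightarrow{a}\mu$ iff some tree $P\in\mathcal{P}$ has a transition $s\xrightarrow{a}\mu_p$ with $[s]=e$ and $\mu(e')=\sum_{s'\in e'}\mu_p(s')$ for all $e'\in E_\Pi$. *)

theory Defs
  imports Complex_Main "HOL-Library.Disjoint_Sets"
begin

record ('s, 'a) lpts =
  states :: "'s set"
  start  :: 's
  acts   :: "'a set"
  trans  :: "('s \<times> 'a \<times> ('s \<Rightarrow> rat)) set"

definition is_dist :: "'s set \<Rightarrow> ('s \<Rightarrow> rat) \<Rightarrow> bool" where
  "is_dist S \<mu> \<longleftrightarrow> (\<forall>s. 0 \<le> \<mu> s) \<and> {s. \<mu> s \<noteq> 0} \<subseteq> S \<and> sum \<mu> S = 1"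

definition wf_lpts :: "('s, 'a) lpts \<Rightarrow> bool" where
  "wf_lpts L \<longleftrightarrow> finite (states L) \<and> start L \<in> states L \<and> finite (acts L)
     \<and> finite (trans L)
     \<and> (\<forall>(s, a, \<mu>) \<in> trans L. s \<in> states L \<and> a \<in> acts L \<and> is_dist (states L) \<mu>)"

definition stochastic_tree :: "('s, 'a) lpts \<Rightarrow> bool" where
  "stochastic_tree L \<longleftrightarrow> wf_lpts L
     \<and> (\<forall>(s, a, \<mu>) \<in> trans L. \<mu> (start L) = 0)
     \<and> (\<forall>s \<in> states L. s \<noteq> start L \<longrightarrow> (\<exists>!t. t \<in> trans L \<and> snd (snd t) s > 0))"

definition lift_rel ::
  "'s1 set \<Rightarrow> 's2 set \<Rightarrow> ('s1 \<times> 's2) set \<Rightarrow> ('s1 \<Rightarrow> rat) \<Rightarrow> ('s2 \<Rightarrow> rat) \<Rightarrow> bool" where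
  "lift_rel S1 S2 R \<mu>1 \<mu>2 \<longleftrightarrow> (\<exists>w :: 's1 \<Rightarrow> 's2 \<Rightarrow> rat.
      (\<forall>s1\<in>S1. \<forall>s2\<in>S2. 0 \<le> w s1 s2 \<and> w s1 s2 \<le> 1)
    \<and> (\<forall>s1\<in>S1. (\<Sum>s2\<in>S2. w s1 s2) = \<mu>1 s1)
    \<and> (\<forall>s2\<in>S2. (\<Sum>s1\<in>S1. w s1 s2) = \<mu>2 s2)
    \<and> (\<forall>s1\<in>S1. \<forall>s2\<in>S2. w s1 s2 > 0 \<longrightarrow> (s1, s2) \<in> R))"

definition strong_sim :: "('s1, 'a) lpts \<Rightarrow> ('s2, 'a) lpts \<Rightarrow> ('s1 \<times> 's2) set \<Rightarrow> bool" where
  "strong_sim L1 L2 R \<longleftrightarrow> R \<subseteq> states L1 \<times> states L2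
     \<and> (\<forall>(s1, s2) \<in> R. \<forall>a \<mu>1. (s1, a, \<mu>1) \<in> trans L1 \<longrightarrow>
          (\<exists>\<mu>2. (s2, a, \<mu>2) \<in> trans L2 \<and> lift_rel (states L1) (states L2) R \<mu>1 \<mu>2))"

definition sim_le :: "('s1, 'a) lpts \<Rightarrow> ('s2, 'a) lpts \<Rightarrow> bool" (infix "\<preceq>\<^sub>s" 50) where
  "L1 \<preceq>\<^sub>s L2 \<longleftrightarrow> (\<exists>R. strong_sim L1 L2 R \<and> (start L1, start L2) \<in> R)"

definition union_states :: "('s, 'a) lpts set \<Rightarrow> (('s, 'a) lpts \<times> 's) set" where
  "union_states \<P> = {(P, s). P \<in> \<P> \<and> s \<in> states P}"

definition cls :: "'x set set \<Rightarrow> 'x \<Rightarrow> 'x set" where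
  "cls Q x = (THE e. e \<in> Q \<and> x \<in> e)"

definition quotient ::
  "('s, 'a) lpts set \<Rightarrow> (('s, 'a) lpts \<times> 's) set set \<Rightarrow> ((('s, 'a) lpts \<times> 's) set, 'a) lpts" where
  "quotient \<P> Q = \<lparr>
     states = Q,
     start = cls Q (let P = (SOME P. P \<in> \<P>) in (P, start P)),
     acts = (\<Union>P\<in>\<P>. acts P),
     trans = {(e, a, \<mu>). \<exists>P\<in>\<P>. \<exists>s \<mu>p. (s, a, \<mu>p) \<in> trans P \<and> cls Q (P, s) = e
                \<and> \<mu> = (\<lambda>e'. if e' \<in> Q then (\<Sum>s'\<in>{s'\<in>states P. (P, s') \<in> e'}. \<mu>p s') else 0)} \<rparr>"

end

theory Submission
  imports Defs
begin

text \<open>Choose for every tree P a simulation R_P of P by L. The start state of a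
  tree receives no probability in any transition, so R_P may be taken to relate it to
  start L only. Group the states of all trees by the set of L-states that R relates
  them to: there are at most 2^k groups, the start states all fall into the group of
  {start L}, and relating each group to the L-states of its members simulates the
  quotient, because the coupling that matches a step of a tree pushes forward along
  the quotient map to a coupling matching the corresponding quotient step.\<close>

lemma lift_relE:
  assumes "lift_rel S1 S2 R \<mu>1 \<mu>2"
  obtains w where "\<forall>s\<in>S1. \<forall>t\<in>S2. 0 \<le> w s t \<and> w s t \<le> 1"
    and "\<forall>s\<in>S1. (\<Sum>t\<in>S2. w s t) = \<mu>1 s" and "\<forall>t\<in>S2. (\<Sum>s\<in>S1. w s t) = \<mu>2 t"
    and "\<forall>s\<in>S1. \<forall>t\<in>S2. w s t > 0 \<longrightarrow> (s, t) \<in> R"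
  using assms unfolding lift_rel_def by blast

lemma lift_rel_cong_mono:
  assumes "lift_rel S1 S2 R \<mu>1 \<mu>2" and "\<And>s. s \<in> S1 \<Longrightarrow> \<mu>1 s = \<nu>1 s"
    and "R \<inter> S1 \<times> S2 \<subseteq> R'"
  shows "lift_rel S1 S2 R' \<nu>1 \<mu>2"
proof -
  obtain w where "\<forall>s\<in>S1. \<forall>t\<in>S2. 0 \<le> w s t \<and> w s t \<le> 1"
    and "\<forall>s\<in>S1. (\<Sum>t\<in>S2. w s t) = \<mu>1 s" and "\<forall>t\<in>S2. (\<Sum>s\<in>S1. w s t) = \<mu>2 t"
    and "\<forall>s\<in>S1. \<forall>t\<in>S2. w s t > 0 \<longrightarrow> (s, t) \<in> R"
    using assms(1) by (rule lift_relE)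
  with assms(2,3) show ?thesis
    unfolding lift_rel_def by (intro exI[of _ w]) auto
qed

lemma lift_rel_restrict_support:
  assumes "lift_rel S1 S2 R \<mu>1 \<mu>2" and "finite S2"
  shows "lift_rel S1 S2 {(s, t) \<in> R. \<mu>1 s \<noteq> 0} \<mu>1 \<mu>2"
proof -
  obtain w where nonneg: "\<forall>s\<in>S1. \<forall>t\<in>S2. 0 \<le> w s t \<and> w s t \<le> 1"
    and rows: "\<forall>s\<in>S1. (\<Sum>t\<in>S2. w s t) = \<mu>1 s"
    and cols: "\<forall>t\<in>S2. (\<Sum>s\<in>S1. w s t) = \<mu>2 t"
    and supp: "\<forall>s\<in>S1. \<forall>t\<in>S2. w s t > 0 \<longrightarrow> (s, t) \<in> R"
    using assms(1) by (rule lift_relE)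
  have "w s t \<le> \<mu>1 s" if "s \<in> S1" "t \<in> S2" for s t
    using member_le_sum[of t S2 "w s"] nonneg rows that assms(2) by auto
  then have "\<forall>s\<in>S1. \<forall>t\<in>S2. w s t > 0 \<longrightarrow> (s, t) \<in> {(s, t) \<in> R. \<mu>1 s \<noteq> 0}"
    using supp by fastforce
  with nonneg rows cols show ?thesis unfolding lift_rel_def by blast
qed

lemma lift_rel_image:
  assumes lr: "lift_rel S1 S2 R \<mu>1 \<mu>2" and dist: "is_dist S1 \<mu>1"
    and fin: "finite S1" "finite S2" "finite E" and f: "f ` S1 \<subseteq> E"
  shows "lift_rel E S2 ((\<lambda>(s, t). (f s, t)) ` R) (\<lambda>e. \<Sum>s\<in>{s\<in>S1. f s = e}. \<mu>1 s) \<mu>2"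
proof -
  obtain w where nonneg: "\<forall>s\<in>S1. \<forall>t\<in>S2. 0 \<le> w s t \<and> w s t \<le> 1"
    and rows: "\<forall>s\<in>S1. (\<Sum>t\<in>S2. w s t) = \<mu>1 s"
    and cols: "\<forall>t\<in>S2. (\<Sum>s\<in>S1. w s t) = \<mu>2 t"
    and supp: "\<forall>s\<in>S1. \<forall>t\<in>S2. w s t > 0 \<longrightarrow> (s, t) \<in> R"
    using lr by (rule lift_relE)
  define fibre where "fibre e = {s\<in>S1. f s = e}" for e
  define w' where "w' e t = (\<Sum>s\<in>fibre e. w s t)" for e t
  have entry_le: "w s t \<le> \<mu>1 s" if "s \<in> S1" "t \<in> S2" for s t
    using member_le_sum[of t S2 "w s"] nonneg rows that fin(2) by auto
  have bounds: "0 \<le> w' e t \<and> w' e t \<le> 1" if "t \<in> S2" for e t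
  proof
    show "0 \<le> w' e t"
      unfolding w'_def fibre_def using nonneg that by (intro sum_nonneg) auto
    have "w' e t \<le> (\<Sum>s\<in>fibre e. \<mu>1 s)"
      unfolding w'_def fibre_def using entry_le that by (intro sum_mono) auto
    also have "\<dots> \<le> sum \<mu>1 S1"
      using dist fin(1) unfolding fibre_def is_dist_def by (intro sum_mono2) auto
    finally show "w' e t \<le> 1"
      using dist unfolding is_dist_def by simp
  qed
  have row_sums: "(\<Sum>t\<in>S2. w' e t) = (\<Sum>s\<in>fibre e. \<mu>1 s)" for e
    unfolding w'_def using sum.swap[of "\<lambda>s t. w s t"] rows
    by (metis (no_types, lifting) fibre_def mem_Collect_eq sum.cong)
  have col_sums: "(\<Sum>e\<in>E. w' e t) = \<mu>2 t" if "t \<in> S2" for t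
    unfolding w'_def fibre_def
    using sum.group[OF fin(1) fin(3) f, of "\<lambda>s. w s t"] cols that by simp
  have support: "(e, t) \<in> (\<lambda>(s, t). (f s, t)) ` R" if "t \<in> S2" "w' e t > 0" for e t
  proof -
    obtain s where "s \<in> fibre e" "w s t > 0"
      using \<open>w' e t > 0\<close> sum_nonpos[of "fibre e" "\<lambda>s. w s t"] unfolding w'_def
      by (metis not_le)
    then show ?thesis
      using supp that(1) unfolding fibre_def by force
  qed
  show ?thesis
    unfolding lift_rel_def
    by (rule exI[of _ w']) (use bounds row_sums col_sums support in \<open>auto simp: fibre_def\<close>)
qed

lemma strong_simI:
  assumes "R \<subseteq> states L1 \<times> states L2"
    and "\<And>s1 s2 a \<mu>1. (s1, s2) \<in> R \<Longrightarrow> (s1, a, \<mu>1) \<in> trans L1 \<Longrightarrow>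
           \<exists>\<mu>2. (s2, a, \<mu>2) \<in> trans L2 \<and> lift_rel (states L1) (states L2) R \<mu>1 \<mu>2"
  shows "strong_sim L1 L2 R"
  using assms unfolding strong_sim_def by blast

lemma strong_simD:
  assumes "strong_sim L1 L2 R" and "(s1, s2) \<in> R" and "(s1, a, \<mu>1) \<in> trans L1"
  obtains \<mu>2 where "(s2, a, \<mu>2) \<in> trans L2" and "lift_rel (states L1) (states L2) R \<mu>1 \<mu>2"
  using assms unfolding strong_sim_def by fastforce

lemma strong_sim_diff_unreached:
  assumes sim: "strong_sim P L R" and fin: "finite (states L)"
    and unreached: "\<forall>(s, a, \<mu>) \<in> trans P. \<mu> s0 = 0"
  shows "strong_sim P L (R - {s0} \<times> T)"
proof (rule strong_simI)
  show "R - {s0} \<times> T \<subseteq> states P \<times> states L"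
    using sim unfolding strong_sim_def by blast
  fix s1 s2 a \<mu>1
  assume rel: "(s1, s2) \<in> R - {s0} \<times> T" and tr: "(s1, a, \<mu>1) \<in> trans P"
  obtain \<mu>2 where tr2: "(s2, a, \<mu>2) \<in> trans L"
    and lr: "lift_rel (states P) (states L) R \<mu>1 \<mu>2"
    using strong_simD[OF sim _ tr] rel by blast
  have "\<mu>1 s0 = 0"
    using unreached tr by blast
  then have "{(s, t) \<in> R. \<mu>1 s \<noteq> 0} \<inter> states P \<times> states L \<subseteq> R - {s0} \<times> T"
    by auto
  with tr2 lift_rel_cong_mono[OF lift_rel_restrict_support[OF lr fin]]
  show "\<exists>\<mu>2. (s2, a, \<mu>2) \<in> trans L \<and> lift_rel (states P) (states L) (R - {s0} \<times> T) \<mu>1 \<mu>2"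
    by blast
qed

lemma stochastic_tree_sim_le_start:
  assumes tree: "stochastic_tree P" and wf: "wf_lpts L" and le: "P \<preceq>\<^sub>s L"
  obtains R where "strong_sim P L R" "R `` {start P} = {start L}"
proof -
  obtain R where R: "strong_sim P L R" "(start P, start L) \<in> R"
    using le unfolding sim_le_def by blast
  let ?R = "R - {start P} \<times> (- {start L})"
  have "strong_sim P L ?R"
    using strong_sim_diff_unreached[OF R(1)] tree wf
    unfolding stochastic_tree_def wf_lpts_def by blast
  moreover have "?R `` {start P} = {start L}"
    using R(2) by auto
  ultimately show ?thesis using that by blast
qed

lemma cls_eqI:
  assumes "partition_on A Q" and "e \<in> Q" and "x \<in> e"
  shows "cls Q x = e"
  unfolding cls_def
proof (rule the_equality)
  fix e' assume "e' \<in> Q \<and> x \<in> e'"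
  then show "e' = e"
    using assms partition_onD2 unfolding disjoint_def by blast
qed (use assms in blast)

lemma cls_in_partition:
  assumes "partition_on A Q" and "x \<in> A"
  shows "cls Q x \<in> Q" and "x \<in> cls Q x"
proof -
  obtain e where "e \<in> Q" "x \<in> e"
    using assms partition_onD1 by blast
  then show "cls Q x \<in> Q" "x \<in> cls Q x"
    using cls_eqI[OF assms(1)] by auto
qed

definition fibres :: "'x set \<Rightarrow> ('x \<Rightarrow> 'y) \<Rightarrow> 'x set set" where
  "fibres A f = (\<lambda>y. {x\<in>A. f x = y}) ` f ` A"

lemma fibres_eqD: "e \<in> fibres A f \<Longrightarrow> x \<in> e \<Longrightarrow> y \<in> e \<Longrightarrow> f x = f y"
  unfolding fibres_def by auto

lemma partition_on_fibres: "partition_on A (fibres A f)"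
  unfolding partition_on_def disjoint_def fibres_def by auto

lemma card_fibres_le: "finite A \<Longrightarrow> card (fibres A f) \<le> card (f ` A)"
  unfolding fibres_def by (simp add: card_image_le)

lemma finite_union_states:
  "finite \<P> \<Longrightarrow> \<forall>P\<in>\<P>. finite (states P) \<Longrightarrow> finite (union_states \<P>)"
  unfolding union_states_def
  by (rule finite_subset[of _ "\<Union>P\<in>\<P>. (\<lambda>s. (P, s)) ` states P"]) auto

lemma states_quotient [simp]: "states (quotient \<P> Q) = Q"
  by (simp add: quotient_def)

lemma trans_quotientE:
  assumes "(e, a, \<mu>) \<in> trans (quotient \<P> Q)"
  obtains P s \<mu>p where "P \<in> \<P>" and "(s, a, \<mu>p) \<in> trans P" and "e = cls Q (P, s)"
    and "\<forall>e'\<in>Q. \<mu> e' = (\<Sum>s'\<in>{s'\<in>states P. (P, s') \<in> e'}. \<mu>p s')"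
  using assms unfolding quotient_def by auto

lemma start_quotient:
  assumes "partition_on (union_states \<P>) Q" and "\<P> \<noteq> {}"
    and "e \<in> Q" and "\<forall>P\<in>\<P>. (P, start P) \<in> e"
  shows "start (quotient \<P> Q) = e"
  using assms cls_eqI[OF assms(1)] some_in_eq[of \<P>] unfolding quotient_def by (simp add: Let_def)

lemma quotient_strong_sim:
  assumes part: "partition_on (union_states \<P>) Q"
    and fin: "finite \<P>" "finite (states L)" and wf: "\<forall>P\<in>\<P>. wf_lpts P"
    and sim: "\<And>P. P \<in> \<P> \<Longrightarrow> strong_sim P L (Rel P)"
    and compat: "\<And>e P s P' s'. e \<in> Q \<Longrightarrow> (P, s) \<in> e \<Longrightarrow> (P', s') \<in> e \<Longrightarrow>
                   Rel P `` {s} = Rel P' `` {s'}"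
  shows "strong_sim (quotient \<P> Q) L {(e, t). e \<in> Q \<and> (\<exists>(P, s)\<in>e. (s, t) \<in> Rel P)}"
    (is "strong_sim _ L ?R")
proof (rule strong_simI)
  have finQ: "finite Q"
    using finite_elements[OF finite_union_states part] fin wf unfolding wf_lpts_def by blast
  have in_union: "(P, s) \<in> union_states \<P> \<longleftrightarrow> P \<in> \<P> \<and> s \<in> states P" for P s
    unfolding union_states_def by simp
  have Rel_sub: "Rel P \<subseteq> states P \<times> states L" if "P \<in> \<P>" for P
    using sim[OF that] unfolding strong_sim_def by blast
  have in_own_class: "cls Q (P, s) \<in> Q \<and> (P, s) \<in> cls Q (P, s)" if "P \<in> \<P>" "s \<in> states P" for P s
    using cls_in_partition[OF part] in_union that by blast
  show "?R \<subseteq> states (quotient \<P> Q) \<times> states L"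
    using partition_onD1[OF part] Rel_sub in_union by fastforce
  fix e t a \<mu>
  assume et: "(e, t) \<in> ?R" and tr: "(e, a, \<mu>) \<in> trans (quotient \<P> Q)"
  obtain P s \<mu>p where P: "P \<in> \<P>" and trP: "(s, a, \<mu>p) \<in> trans P" and e: "e = cls Q (P, s)"
    and \<mu>: "\<forall>e'\<in>Q. \<mu> e' = (\<Sum>s'\<in>{s'\<in>states P. (P, s') \<in> e'}. \<mu>p s')"
    using trans_quotientE[OF tr] by blast
  have dist: "is_dist (states P) \<mu>p" and s: "s \<in> states P" and finP: "finite (states P)"
    using wf P trP unfolding wf_lpts_def by auto
  have "(P, s) \<in> e"
    using in_own_class[OF P s] e by blast
  moreover obtain P' s' where "(P', s') \<in> e" "(s', t) \<in> Rel P'" "e \<in> Q"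
    using et by blast
  ultimately have "(s, t) \<in> Rel P"
    using compat by blast
  then obtain \<mu>2 where tr2: "(t, a, \<mu>2) \<in> trans L"
    and lr: "lift_rel (states P) (states L) (Rel P) \<mu>p \<mu>2"
    using strong_simD[OF sim[OF P] _ trP] by blast
  let ?f = "\<lambda>s'. cls Q (P, s')"
  have "?f ` states P \<subseteq> Q"
    using in_own_class[OF P] by blast
  with lr dist finP fin(2) finQ
  have lr_Q: "lift_rel Q (states L) ((\<lambda>(s', t'). (?f s', t')) ` Rel P)
                (\<lambda>e'. \<Sum>s'\<in>{s'\<in>states P. ?f s' = e'}. \<mu>p s') \<mu>2"
    by (rule lift_rel_image)
  have fibre_eq: "{s'\<in>states P. ?f s' = e'} = {s'\<in>states P. (P, s') \<in> e'}" if "e' \<in> Q" for e'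
    using cls_eqI[OF part that] in_own_class[OF P] by blast
  have "(?f s', t') \<in> ?R" if "(s', t') \<in> Rel P" for s' t'
    using that in_own_class[OF P] Rel_sub[OF P] by blast
  then have "lift_rel Q (states L) ?R \<mu> \<mu>2"
    using \<mu> fibre_eq by (intro lift_rel_cong_mono[OF lr_Q]) auto
  with tr2 show "\<exists>\<mu>2. (t, a, \<mu>2) \<in> trans L \<and> lift_rel (states (quotient \<P> Q)) (states L) ?R \<mu> \<mu>2"
    by auto
qed

theorem lemma7:
  fixes \<P> :: "('s, 'a) lpts set" and L :: "('t, 'a) lpts"
  assumes "finite \<P>" and "\<P> \<noteq> {}"
    and "\<forall>P\<in>\<P>. stochastic_tree P"
    and "wf_lpts L"
    and "\<forall>P\<in>\<P>. P \<preceq>\<^sub>s L"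
  shows "\<exists>Q. partition_on (union_states \<P>) Q
           \<and> (\<exists>e\<in>Q. \<forall>P\<in>\<P>. (P, start P) \<in> e)
           \<and> card Q \<le> 2 ^ card (states L)
           \<and> quotient \<P> Q \<preceq>\<^sub>s L"
proof -
  have finL: "finite (states L)" and wfP: "\<forall>P\<in>\<P>. wf_lpts P"
    using assms(3,4) unfolding wf_lpts_def stochastic_tree_def by auto
  obtain Rel where Rel: "\<forall>P\<in>\<P>. strong_sim P L (Rel P) \<and> Rel P `` {start P} = {start L}"
    using stochastic_tree_sim_le_start assms(3-5) by metis
  define key where "key = (\<lambda>(P, s). Rel P `` {s})"
  define Q where "Q = fibres (union_states \<P>) key"
  define e0 where "e0 = {x\<in>union_states \<P>. key x = {start L}}"
  have part: "partition_on (union_states \<P>) Q"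
    unfolding Q_def by (rule partition_on_fibres)
  have starts: "(P, start P) \<in> e0" if "P \<in> \<P>" for P
    using that Rel wfP unfolding e0_def key_def union_states_def wf_lpts_def by auto
  have e0: "e0 \<in> Q"
    using starts assms(2) unfolding Q_def fibres_def e0_def by blast
  have "key ` union_states \<P> \<subseteq> Pow (states L)"
    using Rel unfolding key_def union_states_def strong_sim_def by blast
  then have card: "card Q \<le> 2 ^ card (states L)"
    using card_fibres_le[OF finite_union_states, of \<P> key] card_mono[of "Pow (states L)"]
      assms(1) wfP finL unfolding Q_def wf_lpts_def
    by (metis (no_types, lifting) card_Pow finite_Pow_iff le_trans)
  let ?R = "{(e, t). e \<in> Q \<and> (\<exists>(P, s)\<in>e. (s, t) \<in> Rel P)}"
  have "Rel P `` {s} = Rel P' `` {s'}" if "e \<in> Q" "(P, s) \<in> e" "(P', s') \<in> e" for e P s P' s'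
    using fibres_eqD[of e _ key] that unfolding Q_def key_def by fastforce
  then have "strong_sim (quotient \<P> Q) L ?R"
    using quotient_strong_sim[OF part assms(1) finL wfP] Rel by blast
  moreover have "(start (quotient \<P> Q), start L) \<in> ?R"
    using start_quotient[OF part assms(2) e0] e0 starts assms(2) Rel by blast
  ultimately have "quotient \<P> Q \<preceq>\<^sub>s L"
    unfolding sim_le_def by blast
  with part e0 starts card show ?thesis
    by blast
qed

end
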